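(* Let $$C= \begin{pmatrix} -1& 2& 2\\ -2&1& 2\\ -2&2& 3 \end{pmatrix}.$$ For every positive integer $n$, writing $C^n(3,4,5)^\top=(x,y,z)^\top$, the circumradius of the triangle with side lengths $x,y,z$ is $R_n=2n^2+4n+\frac52$.
   Context: Triples are regarded as row vectors and $\top$ denotes transpose. The triple $C^n(3,4,5)^\top$ is a primitive Pythagorean triple (positive integers with $x^2+y^2=z^2$), so the triangle is a right triangle with hypotenuse $z$. *)

theory Defs
  imports "HOL-Analysis.Analysis"
begin

definition Cmat :: "real^3^3" where
  "Cmat = vector [vector [-1, 2, 2], vector [-2, 1, 2], vector [-2, 2, 3]]"

definition mat_pow :: "real^'n^'n \<Rightarrow> nat \<Rightarrow> real^'n^'n" where
  "mat_pow M n = ((\<lambda>A. M ** A) ^^ n) (mat 1)"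

text \<open>Circumradius of a triangle with side lengths a, b, c:
  R = abc / (4 * Area), with Area given by Heron's formula,
  i.e. 4 * Area = sqrt((a+b+c)(-a+b+c)(a-b+c)(a+b-c)).\<close>
definition circumradius :: "real \<Rightarrow> real \<Rightarrow> real \<Rightarrow> real" where
  "circumradius a b c =
     a * b * c / sqrt ((a + b + c) * (- a + b + c) * (a - b + c) * (a + b - c))"

end

theory Submission
  imports Defs
begin

text \<open>With \<open>m = 2n + 2\<close>, induction shows \<open>C\<^sup>n (3,4,5)\<^sup>T = (m\<^sup>2 - 1, 2m, m\<^sup>2 + 1)\<^sup>T\<close>,
  a right triangle with hypotenuse \<open>z\<close>. For a right triangle Heron's product collapses
  to \<open>(2xy)\<^sup>2\<close>, so the circumradius is half the hypotenuse (Thales).\<close>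

lemma mat_pow_Suc: "mat_pow M (Suc n) = M ** mat_pow M n"
  by (simp add: mat_pow_def)

lemma mat_pow_Suc_mult_vector: "mat_pow M (Suc n) *v x = M *v (mat_pow M n *v x)"
  by (simp add: mat_pow_Suc matrix_vector_mul_assoc)

lemma Cmat_mult_vector:
  "Cmat *v (vector [a, b, c] :: real^3) =
     vector [- a + 2 * b + 2 * c, - 2 * a + b + 2 * c, - 2 * a + 2 * b + 3 * c]"
  unfolding Cmat_def
  by (simp add: vec_eq_iff forall_3 matrix_vector_mult_def sum_3 vector_3)

lemma Cmat_pow_mult_345:
  fixes n :: nat
  defines "m \<equiv> 2 * real n + 2"
  shows "mat_pow Cmat n *v (vector [3, 4, 5] :: real^3) = vector [m\<^sup>2 - 1, 2 * m, m\<^sup>2 + 1]"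
  unfolding m_def
proof (induction n)
  case 0
  show ?case by (simp add: mat_pow_def)
next
  case (Suc n)
  show ?case
    unfolding mat_pow_Suc_mult_vector Suc Cmat_mult_vector
    by (simp add: algebra_simps power2_eq_square)
qed

lemma heron_product_right_triangle:
  fixes x y z :: real
  assumes "x\<^sup>2 + y\<^sup>2 = z\<^sup>2"
  shows "(x + y + z) * (- x + y + z) * (x - y + z) * (x + y - z) = (2 * x * y)\<^sup>2"
proof -
  have "(x + y + z) * (- x + y + z) * (x - y + z) * (x + y - z)
        = 4 * x\<^sup>2 * y\<^sup>2 - (x\<^sup>2 + y\<^sup>2 - z\<^sup>2)\<^sup>2"
    by (simp add: algebra_simps power2_eq_square)
  then show ?thesis
    using assms by (simp add: power_mult_distrib)
qed

lemma circumradius_right_triangle: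
  fixes x y z :: real
  assumes "x > 0" "y > 0" "x\<^sup>2 + y\<^sup>2 = z\<^sup>2"
  shows "circumradius x y z = z / 2"
proof -
  have "sqrt ((x + y + z) * (- x + y + z) * (x - y + z) * (x + y - z)) = 2 * x * y"
    using assms by (simp only: heron_product_right_triangle real_sqrt_abs) simp
  then show ?thesis
    unfolding circumradius_def using assms by simp
qed

theorem mainTheorem9:
  fixes n :: nat
  assumes "n \<ge> 1"
  defines "v \<equiv> mat_pow Cmat n *v (vector [3, 4, 5] :: real^3)"
  shows "circumradius (v $ 1) (v $ 2) (v $ 3) = 2 * real n ^ 2 + 4 * real n + 5 / 2"
proof -
  define m where "m = 2 * real n + 2"
  have v: "v $ 1 = m\<^sup>2 - 1" "v $ 2 = 2 * m" "v $ 3 = m\<^sup>2 + 1"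
    unfolding v_def m_def Cmat_pow_mult_345 by (simp_all add: vector_3)
  have "m > 1"
    unfolding m_def by simp
  then have "m\<^sup>2 > 1"
    by (simp add: one_less_power)
  moreover have "(m\<^sup>2 - 1)\<^sup>2 + (2 * m)\<^sup>2 = (m\<^sup>2 + 1)\<^sup>2"
    by (simp add: algebra_simps power2_eq_square)
  ultimately have "circumradius (v $ 1) (v $ 2) (v $ 3) = (m\<^sup>2 + 1) / 2"
    unfolding v using \<open>m > 1\<close> by (intro circumradius_right_triangle) simp_all
  then show ?thesis
    unfolding m_def by (simp add: power2_eq_square algebra_simps)
qed

end
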